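(* Let $\mathcal L$ be a choice logic and let $m$ be a degree obtainable in $\mathcal L$. Then there is an $\mathcal L$-formula $F$ such that $\deg_{\mathcal L}(\mathcal I,F)=m$ for every interpretation $\mathcal I$.
   Context: Fix a countably infinite set $\mathcal U$ of propositional variables. Let $\mathbb N=\{1,2,3,\dots\}$ and $\overline{\mathbb N}=\mathbb N\cup\{\infty\}$, with $n<\infty$ for all $n\in\mathbb N$. An interpretation is a set $\mathcal I\subseteq\mathcal U$ (the variables set to true). A choice logic $\mathcal L$ is specified by a finite set $C_{\mathcal L}$ of binary connective symbols disjoint from $\{\neg,\land,\lor\}$ and, for each $\circ\in C_{\mathcal L}$, a function $\mathrm{opt}_\circ:\mathbb N^2\to\mathbb N$ with $\mathrm{opt}_\circ(k,\ell)\le (k+1)(\ell+1)$ for all $k,\ell$, and a function $\deg_\circ:\mathbb N^2\times\overline{\mathbb N}^2\to\overline{\mathbb N}$ such that for all $k,\ell\in\mathbb N$, $m,n\in\overline{\mathbb N}$, either $\deg_\circ(k,\ell,m,n)\le \mathrm{opt}_\circ(k,\ell)$ or $\deg_\circ(k,\ell,m,n)=\infty$. The $\mathcal L$-formulas are built from variables in $\mathcal U$ using unary $\neg$ and binary $\land,\lor$ and the connectives in $C_{\mathcal L}$. The optionality $\mathrm{opt}_{\mathcal L}$ of formulas is defined by: $\mathrm{opt}_{\mathcal L}(a)=1$ for $a\in\mathcal U$; $\mathrm{opt}_{\mathcal L}(\neg F)=1$; $\mathrm{opt}_{\mathcal L}(F\land G)=\mathrm{opt}_{\mathcal L}(F\lor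 G)=\max(\mathrm{opt}_{\mathcal L}(F),\mathrm{opt}_{\mathcal L}(G))$; $\mathrm{opt}_{\mathcal L}(F\circ G)=\mathrm{opt}_\circ(\mathrm{opt}_{\mathcal L}(F),\mathrm{opt}_{\mathcal L}(G))$ for $\circ\in C_{\mathcal L}$. The satisfaction degree $\deg_{\mathcal L}(\mathcal I,F)\in\overline{\mathbb N}$ is defined by: $\deg_{\mathcal L}(\mathcal I,a)=1$ if $a\in\mathcal I$ and $\infty$ otherwise; $\deg_{\mathcal L}(\mathcal I,\neg F)=1$ if $\deg_{\mathcal L}(\mathcal I,F)=\infty$ and $\infty$ otherwise; $\deg_{\mathcal L}(\mathcal I,F\land G)=\max(\deg_{\mathcal L}(\mathcal I,F),\deg_{\mathcal L}(\mathcal I,G))$; $\deg_{\mathcal L}(\mathcal I,F\lor G)=\min(\deg_{\mathcal L}(\mathcal I,F),\deg_{\mathcal L}(\mathcal I,G))$; $\deg_{\mathcal L}(\mathcal I,F\circ G)=\deg_\circ(\mathrm{opt}_{\mathcal L}(F),\mathrm{opt}_{\mathcal L}(G),\deg_{\mathcal L}(\mathcal I,F),\deg_{\mathcal L}(\mathcal I,G))$ for $\circ\in C_{\mathcal L}$. A degree $m\in\overline{\mathbb N}$ is obtainable in $\mathcal L$ if there exist an interpretation $\mathcal I$ and an $\mathcal L$-formula $G$ with $\deg_{\mathcal L}(\mathcal I,G)=m$; $\mathrm{Obt}(\mathcal L)$ denotes the set of obtainable degrees. *)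

theory Defs
  imports Main "HOL-Library.Extended_Nat"
begin

text \<open>Degrees in N-bar = {1,2,...} \<union> {\<infinity>} are modelled as enat values \<ge> 1;
  optionalities in N = {1,2,...} as nat values \<ge> 1.
  Connective symbols are elements of a type 'c; a choice logic fixes a finite
  set C of them together with opt and deg functions for each.\<close>

datatype 'c cformula =
    Var nat
  | Neg "'c cformula"
  | Conj "'c cformula" "'c cformula"
  | Disj "'c cformula" "'c cformula"
  | Conn 'c "'c cformula" "'c cformula"

definition choice_logic ::
  "'c set \<Rightarrow> ('c \<Rightarrow> nat \<Rightarrow> nat \<Rightarrow> nat) \<Rightarrow> ('c \<Rightarrow> nat \<Rightarrow> nat \<Rightarrow> enat \<Rightarrow> enat \<Rightarrow> enat) \<Rightarrow> bool" where
  "choice_logic C opt dg \<longleftrightarrow>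
     finite C \<and>
     (\<forall>c\<in>C. \<forall>k l. 1 \<le> k \<longrightarrow> 1 \<le> l \<longrightarrow>
        1 \<le> opt c k l \<and> opt c k l \<le> (k + 1) * (l + 1) \<and>
        (\<forall>m n. 1 \<le> m \<longrightarrow> 1 \<le> n \<longrightarrow>
           1 \<le> dg c k l m n \<and>
           (dg c k l m n \<le> enat (opt c k l) \<or> dg c k l m n = \<infinity>)))"

fun is_formula :: "'c set \<Rightarrow> 'c cformula \<Rightarrow> bool" where
  "is_formula C (Var a) = True"
| "is_formula C (Neg F) = is_formula C F"
| "is_formula C (Conj F G) = (is_formula C F \<and> is_formula C G)"
| "is_formula C (Disj F G) = (is_formula C F \<and> is_formula C G)"
| "is_formula C (Conn c F G) = (c \<in> C \<and> is_formula C F \<and> is_formula C G)"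

fun optL :: "('c \<Rightarrow> nat \<Rightarrow> nat \<Rightarrow> nat) \<Rightarrow> 'c cformula \<Rightarrow> nat" where
  "optL opt (Var a) = 1"
| "optL opt (Neg F) = 1"
| "optL opt (Conj F G) = max (optL opt F) (optL opt G)"
| "optL opt (Disj F G) = max (optL opt F) (optL opt G)"
| "optL opt (Conn c F G) = opt c (optL opt F) (optL opt G)"

fun degL :: "('c \<Rightarrow> nat \<Rightarrow> nat \<Rightarrow> nat) \<Rightarrow> ('c \<Rightarrow> nat \<Rightarrow> nat \<Rightarrow> enat \<Rightarrow> enat \<Rightarrow> enat)
             \<Rightarrow> nat set \<Rightarrow> 'c cformula \<Rightarrow> enat" where
  "degL opt dg I (Var a) = (if a \<in> I then 1 else \<infinity>)"
| "degL opt dg I (Neg F) = (if degL opt dg I F = \<infinity> then 1 else \<infinity>)"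
| "degL opt dg I (Conj F G) = max (degL opt dg I F) (degL opt dg I G)"
| "degL opt dg I (Disj F G) = min (degL opt dg I F) (degL opt dg I G)"
| "degL opt dg I (Conn c F G) =
     dg c (optL opt F) (optL opt G) (degL opt dg I F) (degL opt dg I G)"

definition obtainable ::
  "'c set \<Rightarrow> ('c \<Rightarrow> nat \<Rightarrow> nat \<Rightarrow> nat) \<Rightarrow> ('c \<Rightarrow> nat \<Rightarrow> nat \<Rightarrow> enat \<Rightarrow> enat \<Rightarrow> enat) \<Rightarrow> enat \<Rightarrow> bool" where
  "obtainable C opt dg m \<longleftrightarrow> (\<exists>I G. is_formula C G \<and> degL opt dg I G = m)"

end

theory Submission
  imports Defs
begin

text \<open>Replace every variable by a tautology or a contradiction according to its truth value
  in a fixed interpretation I. Optionalities are unchanged, and every interpretation assigns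
  the resulting formula the same degree that I assigns the original one.\<close>

fun freeze :: "nat set \<Rightarrow> 'c cformula \<Rightarrow> 'c cformula" where
  "freeze I (Var a) =
     (if a \<in> I then Disj (Var a) (Neg (Var a)) else Conj (Var a) (Neg (Var a)))"
| "freeze I (Neg F) = Neg (freeze I F)"
| "freeze I (Conj F G) = Conj (freeze I F) (freeze I G)"
| "freeze I (Disj F G) = Disj (freeze I F) (freeze I G)"
| "freeze I (Conn c F G) = Conn c (freeze I F) (freeze I G)"

lemma is_formula_freeze [simp]: "is_formula C (freeze I F) = is_formula C F"
  by (induction F) auto

lemma optL_freeze [simp]: "optL opt (freeze I F) = optL opt F"
  by (induction F) auto

lemma degL_freeze [simp]: "degL opt dg J (freeze I F) = degL opt dg I F"
  by (induction F) auto

theorem mainTheorem3: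
  fixes C :: "'c set" and opt :: "'c \<Rightarrow> nat \<Rightarrow> nat \<Rightarrow> nat"
    and dg :: "'c \<Rightarrow> nat \<Rightarrow> nat \<Rightarrow> enat \<Rightarrow> enat \<Rightarrow> enat" and m :: enat
  assumes "choice_logic C opt dg"
    and "obtainable C opt dg m"
  shows "\<exists>F. is_formula C F \<and> (\<forall>I. degL opt dg I F = m)"
proof -
  obtain I G where G: "is_formula C G" and deg_G: "degL opt dg I G = m"
    using assms(2) unfolding obtainable_def by blast
  have "is_formula C (freeze I G)" using G by simp
  moreover have "\<forall>J. degL opt dg J (freeze I G) = m" using deg_G by simp
  ultimately show ?thesis by blast
qed

end
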